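(* Let $(P,\mathcal{B})$ be a pairwise balanced design with $n\ge 2$ points, and let $\tau$ be the maximum size of a block in $\mathcal{B}$. Then \[\sum_{B\in\mathcal{B}}|B|\ \ge\ \frac{n(n-1)}{\tau-1}.\] Moreover, if $\mathcal{B}$ contains a block of size $k$, then \[\sum_{B\in\mathcal{B}}|B|\ \ge\ (n+1)k-\frac{k^2(k-1)}{n-1}\qquad\text{and}\qquad \sum_{B\in\mathcal{B}}|B|\ \ge\ k-\frac{(n-k)(n-5k-1)}{2}.\] Finally, for every integer $k$ with $n/2\le k\le n$, there exists a pairwise balanced design on $n$ points having a block of size $k$ for which $\sum_{B\in\mathcal{B}}|B| = k-\frac{(n-k)(n-5k-1)}{2}$.
   Context: A pairwise balanced design (PBD) is a pair $(P,\mathcal{B})$ where $P$ is a finite set of points and $\mathcal{B}$ is a family of subsets of $P$ (blocks) such that every two distinct points of $P$ lie in exactly one block. *)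

theory Defs
  imports Complex_Main
begin

definition PBD :: "'a set \<Rightarrow> 'a set set \<Rightarrow> bool" where
  "PBD P \<B> \<longleftrightarrow> finite P \<and> (\<forall>B\<in>\<B>. B \<subseteq> P) \<and>
     (\<forall>x\<in>P. \<forall>y\<in>P. x \<noteq> y \<longrightarrow> (\<exists>!B. B \<in> \<B> \<and> x \<in> B \<and> y \<in> B))"

end

theory Submission
  imports Defs "HOL-Number_Theory.Cong"
begin

text \<open>Every pair of distinct points lies in exactly one block, so double counting ordered pairs
  gives \<open>\<Sum> |B| (|B| - 1) = n (n - 1)\<close>; since \<open>|B| - 1 \<le> \<tau> - 1\<close>, the first bound follows.

  Fix a block \<open>B\<^sub>0\<close> of size \<open>k\<close> and let \<open>m = n - k\<close>. Every other block \<open>B\<close> has \<open>a \<le> 1\<close> points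
  in \<open>B\<^sub>0\<close> and \<open>b\<close> points outside, and counting the pairs across and outside \<open>B\<^sub>0\<close> gives
  \<open>\<Sum> a b = k m\<close> and \<open>\<Sum> b (b - 1) = m (m - 1)\<close>. Hence \<open>\<Sum> |B| \<ge> k + c k m - d m (m - 1)\<close>
  whenever \<open>a + b \<ge> c a b - d b (b - 1)\<close> for all \<open>a \<le> 1\<close>; the choices \<open>(c, d) = (2, 1/2)\<close> and
  \<open>(1 + 2 s - s\<^sup>2, s\<^sup>2)\<close> with \<open>s = k / (n - 1)\<close> give the other two bounds.

  The bound for \<open>(2, 1/2)\<close> is attained when every other block has \<open>a = 1\<close> and \<open>b \<in> {1, 2}\<close>:
  identify the points outside \<open>B\<^sub>0\<close> with \<open>\<int>/m\<close>, and join each \<open>x \<in> B\<^sub>0\<close> to the classes of the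
  partition of \<open>\<int>/m\<close> into the pairs \<open>{i, j}\<close> with \<open>i + j \<equiv> x\<close> and the remaining singletons.
  Since \<open>m \<le> k\<close>, every residue \<open>x\<close> is available as a point of \<open>B\<^sub>0\<close>.\<close>

lemma PBD_finite_block: "PBD P \<B> \<Longrightarrow> B \<in> \<B> \<Longrightarrow> finite B"
  unfolding PBD_def by (meson finite_subset)

lemma PBD_finite: "PBD P \<B> \<Longrightarrow> finite \<B>"
  unfolding PBD_def by (meson Pow_iff finite_Pow_iff finite_subset subsetI)

lemma PBD_block_through_pair:
  assumes "PBD P \<B>" "x \<in> P" "y \<in> P" "x \<noteq> y"
  obtains B where "B \<in> \<B>" "x \<in> B" "y \<in> B"
  using assms unfolding PBD_def by blast

lemma PBD_block_eq:
  assumes "PBD P \<B>" "B \<in> \<B>" "B' \<in> \<B>" "{x, y} \<subseteq> B" "{x, y} \<subseteq> B'" "x \<noteq> y"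
  shows "B = B'"
proof -
  have "x \<in> P" "y \<in> P" using assms unfolding PBD_def by auto
  then have "\<exists>!B. B \<in> \<B> \<and> x \<in> B \<and> y \<in> B" using assms unfolding PBD_def by blast
  then show ?thesis using assms by auto
qed

lemma PBD_card_Int_le_1:
  assumes "PBD P \<B>" "B \<in> \<B>" "B' \<in> \<B>" "B \<noteq> B'"
  shows "card (B \<inter> B') \<le> 1"
proof -
  have "x = y" if "x \<in> B \<inter> B'" "y \<in> B \<inter> B'" for x y
    using PBD_block_eq[OF assms(1-3), of x y] assms(4) that by auto
  then show ?thesis
    using PBD_finite_block[OF assms(1,2)] by (simp add: card_le_Suc0_iff_eq)
qed

lemma PBD_card_eq_block_plus_Diff:
  assumes "PBD P \<B>" "B \<in> \<B>"
  shows "card P = card B + card (P - B)"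
  using assms unfolding PBD_def
  by (metis card_Diff_subset card_mono finite_subset le_add_diff_inverse)

lemma card_Times_minus_Id:
  assumes "finite A" shows "card (A \<times> A - Id) = card A * card A - card A"
proof -
  have "A \<times> A - Id = A \<times> A - (\<lambda>x. (x, x)) ` A" by auto
  moreover have "card ((\<lambda>x. (x, x)) ` A) = card A" by (simp add: card_image inj_on_def)
  ultimately show ?thesis
    using assms by (simp add: card_Diff_subset card_cartesian_product image_subset_iff)
qed

lemma real_card_Times_minus_Id:
  assumes "finite A" shows "real (card (A \<times> A - Id)) = real (card A) * (real (card A) - 1)"
  using card_Times_minus_Id[OF assms] le_square[of "card A"] by (simp add: algebra_simps)

lemma PBD_sum_card_pairs:
  assumes "PBD P \<B>"
  shows "(\<Sum>B\<in>\<B>. card ((B \<times> B - Id) \<inter> R)) = card ((P \<times> P - Id) \<inter> R)"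
proof -
  have "(P \<times> P - Id) \<inter> R \<subseteq> (\<Union>B\<in>\<B>. (B \<times> B - Id) \<inter> R)"
  proof
    fix p assume p: "p \<in> (P \<times> P - Id) \<inter> R"
    then obtain x y where xy: "p = (x, y)" "x \<in> P" "y \<in> P" "x \<noteq> y" by auto
    obtain B where "B \<in> \<B>" "x \<in> B" "y \<in> B" using PBD_block_through_pair[OF assms xy(2-4)] .
    with p xy show "p \<in> (\<Union>B\<in>\<B>. (B \<times> B - Id) \<inter> R)" by auto
  qed
  moreover have "(\<Union>B\<in>\<B>. (B \<times> B - Id) \<inter> R) \<subseteq> (P \<times> P - Id) \<inter> R"
    using assms unfolding PBD_def by auto
  ultimately have union: "(P \<times> P - Id) \<inter> R = (\<Union>B\<in>\<B>. (B \<times> B - Id) \<inter> R)"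
    by (rule antisym)
  have disjoint: "((B \<times> B - Id) \<inter> R) \<inter> ((B' \<times> B' - Id) \<inter> R) = {}"
    if "B \<in> \<B>" "B' \<in> \<B>" "B \<noteq> B'" for B B'
    using PBD_block_eq[OF assms that(1,2)] that(3) by auto
  have finite: "finite ((B \<times> B - Id) \<inter> R)" if "B \<in> \<B>" for B
    using PBD_finite_block[OF assms that] by simp
  have "card (\<Union>B\<in>\<B>. (B \<times> B - Id) \<inter> R) = (\<Sum>B\<in>\<B>. card ((B \<times> B - Id) \<inter> R))"
    using PBD_finite[OF assms] finite disjoint by (intro card_UN_disjoint) auto
  then show ?thesis unfolding union by (rule sym)
qed

lemma PBD_sum_card_Int_mult_card_Diff:
  assumes "PBD P \<B>" "S \<subseteq> P"
  shows "(\<Sum>B\<in>\<B>. card (B \<inter> S) * card (B - S)) = card S * card (P - S)"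
proof -
  have "(\<Sum>B\<in>\<B>. card ((B \<times> B - Id) \<inter> (S \<times> - S))) = card ((P \<times> P - Id) \<inter> (S \<times> - S))"
    by (rule PBD_sum_card_pairs[OF assms(1)])
  moreover have "(B \<times> B - Id) \<inter> (S \<times> - S) = (B \<inter> S) \<times> (B - S)" for B by auto
  moreover have "(P \<times> P - Id) \<inter> (S \<times> - S) = S \<times> (P - S)" using assms(2) by auto
  ultimately show ?thesis using assms(2) by (simp add: card_cartesian_product inf_absorb2)
qed

lemma PBD_sum_card_Diff_mult_pred:
  assumes "PBD P \<B>"
  shows "(\<Sum>B\<in>\<B>. real (card (B - S)) * (real (card (B - S)) - 1))
    = real (card (P - S)) * (real (card (P - S)) - 1)"
proof -
  have restrict: "(A \<times> A - Id) \<inter> ((- S) \<times> (- S)) = (A - S) \<times> (A - S) - Id" for A :: "'a set"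
    by blast
  have "(\<Sum>B\<in>\<B>. card ((B - S) \<times> (B - S) - Id)) = card ((P - S) \<times> (P - S) - Id)"
    using PBD_sum_card_pairs[OF assms, of "(- S) \<times> (- S)"] by (simp only: restrict)
  then have "(\<Sum>B\<in>\<B>. real (card ((B - S) \<times> (B - S) - Id))) = real (card ((P - S) \<times> (P - S) - Id))"
    by (simp only: of_nat_sum[symmetric])
  moreover have "finite P" using assms unfolding PBD_def by simp
  ultimately show ?thesis
    using PBD_finite_block[OF assms] by (simp add: real_card_Times_minus_Id)
qed

lemma PBD_sum_card_eq_excess:
  fixes c d :: real
  assumes "PBD P \<B>" "B\<^sub>0 \<in> \<B>"
  defines "k \<equiv> real (card B\<^sub>0)" and "m \<equiv> real (card (P - B\<^sub>0))"
  shows "real (\<Sum>B\<in>\<B>. card B) = k + c * k * m - d * (m * (m - 1))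
    + (\<Sum>B\<in>\<B> - {B\<^sub>0}. real (card (B \<inter> B\<^sub>0)) + real (card (B - B\<^sub>0))
        - (c * real (card (B \<inter> B\<^sub>0)) * real (card (B - B\<^sub>0))
           - d * (real (card (B - B\<^sub>0)) * (real (card (B - B\<^sub>0)) - 1))))"
proof -
  have fin: "finite \<B>" by (rule PBD_finite[OF assms(1)])
  have "B\<^sub>0 \<subseteq> P" using assms unfolding PBD_def by simp
  have "real (\<Sum>B\<in>\<B>. card B) = (\<Sum>B\<in>\<B>. real (card (B \<inter> B\<^sub>0)) + real (card (B - B\<^sub>0)))"
    unfolding of_nat_sum using card_Int_Diff PBD_finite_block[OF assms(1)]
    by (intro sum.cong) (auto simp flip: of_nat_add)
  also have "\<dots> = k + (\<Sum>B\<in>\<B> - {B\<^sub>0}. real (card (B \<inter> B\<^sub>0)) + real (card (B - B\<^sub>0)))"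
    unfolding k_def by (simp add: sum.remove[OF fin assms(2)])
  finally have total: "real (\<Sum>B\<in>\<B>. card B) = \<dots>" .
  have "real (\<Sum>B\<in>\<B> - {B\<^sub>0}. card (B \<inter> B\<^sub>0) * card (B - B\<^sub>0)) = real (card B\<^sub>0 * card (P - B\<^sub>0))"
    using PBD_sum_card_Int_mult_card_Diff[OF assms(1) \<open>B\<^sub>0 \<subseteq> P\<close>]
    by (simp add: sum.remove[OF fin assms(2)])
  then have "(\<Sum>B\<in>\<B> - {B\<^sub>0}. real (card (B \<inter> B\<^sub>0)) * real (card (B - B\<^sub>0))) = k * m"
    unfolding k_def m_def of_nat_sum by simp
  moreover have "(\<Sum>B\<in>\<B> - {B\<^sub>0}. real (card (B - B\<^sub>0)) * (real (card (B - B\<^sub>0)) - 1)) = m * (m - 1)"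
    using PBD_sum_card_Diff_mult_pred[OF assms(1), of B\<^sub>0]
    unfolding m_def by (simp add: sum.remove[OF fin assms(2)])
  moreover have "(\<Sum>B\<in>\<B> - {B\<^sub>0}. c * real (card (B \<inter> B\<^sub>0)) * real (card (B - B\<^sub>0)))
      = c * (\<Sum>B\<in>\<B> - {B\<^sub>0}. real (card (B \<inter> B\<^sub>0)) * real (card (B - B\<^sub>0)))"
    "(\<Sum>B\<in>\<B> - {B\<^sub>0}. d * (real (card (B - B\<^sub>0)) * (real (card (B - B\<^sub>0)) - 1)))
      = d * (\<Sum>B\<in>\<B> - {B\<^sub>0}. real (card (B - B\<^sub>0)) * (real (card (B - B\<^sub>0)) - 1))"
    by (simp_all add: sum_distrib_left mult.assoc)
  ultimately show ?thesis
    unfolding total by (simp add: sum_subtractf sum.distrib)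
qed

lemma PBD_sum_card_ge_block:
  fixes c d :: real
  assumes "PBD P \<B>" "B\<^sub>0 \<in> \<B>"
    and block: "\<And>a b. a \<le> 1 \<Longrightarrow> c * real a * real b - d * (real b * (real b - 1)) \<le> real a + real b"
  defines "k \<equiv> real (card B\<^sub>0)" and "m \<equiv> real (card (P - B\<^sub>0))"
  shows "k + c * k * m - d * (m * (m - 1)) \<le> real (\<Sum>B\<in>\<B>. card B)"
proof -
  have "card (B \<inter> B\<^sub>0) \<le> 1" if "B \<in> \<B> - {B\<^sub>0}" for B
    using PBD_card_Int_le_1[OF assms(1)] that assms(2) by blast
  then have "0 \<le> (\<Sum>B\<in>\<B> - {B\<^sub>0}. real (card (B \<inter> B\<^sub>0)) + real (card (B - B\<^sub>0))
        - (c * real (card (B \<inter> B\<^sub>0)) * real (card (B - B\<^sub>0))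
           - d * (real (card (B - B\<^sub>0)) * (real (card (B - B\<^sub>0)) - 1))))"
    using block by (intro sum_nonneg) (simp add: le_diff_eq)
  then show ?thesis
    using PBD_sum_card_eq_excess[OF assms(1,2), of c d] unfolding k_def m_def by linarith
qed

lemma mult_pred_nonneg: "0 \<le> real b * (real b - 1)"
  by (cases b) simp_all

lemma block_bound_quadratic:
  assumes "a \<le> (1::nat)"
  shows "2 * real a * real b - 1 / 2 * (real b * (real b - 1)) \<le> real a + real b"
proof (cases "a = 0")
  case True
  then show ?thesis using mult_pred_nonneg[of b] by simp
next
  case False
  then have "a = 1" using assms by simp
  moreover have "0 \<le> (real b - 1) * (real b - 2)"
    by (cases "b \<le> 1") (auto simp: le_Suc_eq intro: mult_nonneg_nonneg)
  ultimately show ?thesis by (simp add: algebra_simps)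
qed

lemma block_bound_weighted:
  fixes s :: real
  assumes "a \<le> (1::nat)"
  shows "(1 + 2 * s - s\<^sup>2) * real a * real b - s\<^sup>2 * (real b * (real b - 1)) \<le> real a + real b"
proof (cases "a = 0")
  case True
  then show ?thesis using mult_nonneg_nonneg[OF zero_le_power2[of s] mult_pred_nonneg[of b]] by simp
next
  case False
  then have "a = 1" using assms by simp
  moreover have "0 \<le> (1 - s * real b)\<^sup>2" by simp
  ultimately show ?thesis by (simp add: power2_eq_square algebra_simps)
qed

lemma PBD_two_le_Max_card:
  assumes "PBD P \<B>" "2 \<le> card P"
  shows "2 \<le> Max (card ` \<B>)"
proof -
  obtain x y where "{x, y} \<subseteq> P" "x \<noteq> y"
    using assms(2) by (metis obtain_subset_with_card_n card_2_iff)
  then obtain B where B: "B \<in> \<B>" "x \<in> B" "y \<in> B"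
    using PBD_block_through_pair[OF assms(1)] by (metis insert_subset)
  have "2 = card {x, y}" using \<open>x \<noteq> y\<close> by simp
  also have "\<dots> \<le> card B" using B PBD_finite_block[OF assms(1) B(1)] by (intro card_mono) auto
  also have "\<dots> \<le> Max (card ` \<B>)" using B PBD_finite[OF assms(1)] by simp
  finally show ?thesis .
qed

lemma PBD_sum_card_ge_Max:
  assumes "PBD P \<B>" "2 \<le> card P"
  defines "n \<equiv> real (card P)" and "\<tau> \<equiv> real (Max (card ` \<B>))"
  shows "n * (n - 1) / (\<tau> - 1) \<le> real (\<Sum>B\<in>\<B>. card B)"
proof -
  have "real (card B) * (real (card B) - 1) \<le> (\<tau> - 1) * real (card B)" if "B \<in> \<B>" for B
  proof -
    have "card B \<le> Max (card ` \<B>)" using that PBD_finite[OF assms(1)] by simp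
    then show ?thesis unfolding \<tau>_def by (simp add: mult.commute mult_left_mono)
  qed
  then have "(\<Sum>B\<in>\<B>. real (card B) * (real (card B) - 1)) \<le> (\<tau> - 1) * real (\<Sum>B\<in>\<B>. card B)"
    by (simp add: sum_distrib_left sum_mono)
  moreover have "(\<Sum>B\<in>\<B>. real (card B) * (real (card B) - 1)) = n * (n - 1)"
    using PBD_sum_card_Diff_mult_pred[OF assms(1), of "{}"] unfolding n_def by simp
  moreover have "0 < \<tau> - 1" using PBD_two_le_Max_card[OF assms(1,2)] unfolding \<tau>_def by simp
  ultimately show ?thesis by (simp add: pos_divide_le_eq mult.commute)
qed

lemma PBD_sum_card_ge_cubic:
  assumes "PBD P \<B>" "B\<^sub>0 \<in> \<B>" "2 \<le> card P"
  defines "n \<equiv> real (card P)" and "k \<equiv> real (card B\<^sub>0)"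
  shows "(n + 1) * k - k\<^sup>2 * (k - 1) / (n - 1) \<le> real (\<Sum>B\<in>\<B>. card B)"
proof -
  define s where "s = k / (n - 1)"
  define m where "m = real (card (P - B\<^sub>0))"
  have "n = k + m"
    unfolding n_def k_def m_def using PBD_card_eq_block_plus_Diff[OF assms(1,2)] by simp
  have s: "s * (n - 1) = k" using assms(3) unfolding s_def n_def by simp
  have "(1 + 2 * s - s\<^sup>2) * k * m - s\<^sup>2 * (m * (m - 1)) = k * m + 2 * s * k * m - s * (s * (n - 1)) * m"
    using \<open>n = k + m\<close> by (simp add: algebra_simps power2_eq_square)
  also have "\<dots> = k * m + s * k * m"
    using s by (simp add: algebra_simps)
  also have "\<dots> = (n + 1) * k - s * k * (k - 1) - k"
  proof -
    have "k * k = s * k * (k + m - 1)" using s \<open>n = k + m\<close> by (simp add: algebra_simps)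
    then show ?thesis using \<open>n = k + m\<close> by (simp add: algebra_simps)
  qed
  also have "\<dots> = (n + 1) * k - k\<^sup>2 * (k - 1) / (n - 1) - k"
    using s unfolding s_def by (simp add: power2_eq_square)
  finally have "(n + 1) * k - k\<^sup>2 * (k - 1) / (n - 1) = k + (1 + 2 * s - s\<^sup>2) * k * m - s\<^sup>2 * (m * (m - 1))"
    by simp
  also have "\<dots> \<le> real (\<Sum>B\<in>\<B>. card B)"
    using PBD_sum_card_ge_block[OF assms(1,2) block_bound_weighted] unfolding k_def m_def .
  finally show ?thesis .
qed

lemma PBD_sum_card_ge_quadratic:
  assumes "PBD P \<B>" "B\<^sub>0 \<in> \<B>"
  defines "n \<equiv> real (card P)" and "k \<equiv> real (card B\<^sub>0)"
  shows "k - (n - k) * (n - 5 * k - 1) / 2 \<le> real (\<Sum>B\<in>\<B>. card B)"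
proof -
  define m where "m = real (card (P - B\<^sub>0))"
  have "n = k + m"
    unfolding n_def k_def m_def using PBD_card_eq_block_plus_Diff[OF assms(1,2)] by simp
  then have "k - (n - k) * (n - 5 * k - 1) / 2 = k + 2 * k * m - 1 / 2 * (m * (m - 1))"
    by (simp add: field_simps)
  also have "\<dots> \<le> real (\<Sum>B\<in>\<B>. card B)"
    using PBD_sum_card_ge_block[OF assms(1,2) block_bound_quadratic] unfolding k_def m_def .
  finally show ?thesis .
qed

lemma mod_add_left_cancel_less:
  fixes m :: nat
  assumes "j < m" "j' < m" "(i + j) mod m = (i + j') mod m"
  shows "j = j'"
  using assms cong_add_lcancel_nat[where a = i and x = j and y = j' and n = m] by (simp add: cong_def)

text \<open>Point \<open>k + i\<close> stands for the residue \<open>i\<close> modulo \<open>m\<close>; \<open>cyclic_outer m x i\<close> is the class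
  of \<open>i\<close> in the partition belonging to \<open>x\<close> (just \<open>{i}\<close> when \<open>x \<ge> m\<close>).\<close>
definition cyclic_outer :: "nat \<Rightarrow> nat \<Rightarrow> nat \<Rightarrow> nat set" where
  "cyclic_outer m x i = {j. j < m \<and> (j = i \<or> (i + j) mod m = x)}"

definition cyclic_block :: "nat \<Rightarrow> nat \<Rightarrow> nat \<Rightarrow> nat \<Rightarrow> nat set" where
  "cyclic_block k m x i = insert x ((+) k ` cyclic_outer m x i)"

definition cyclic_design :: "nat \<Rightarrow> nat \<Rightarrow> nat set set" where
  "cyclic_design k m = insert {..<k} {cyclic_block k m x i | x i. x < k \<and> i < m}"

lemma cyclic_outer_pair:
  assumes "i < m" "j < m" "(i + j) mod m = x"
  shows "cyclic_outer m x i = {i, j}"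
proof -
  have "j' = j" if "j' < m" "(i + j') mod m = x" for j'
    using mod_add_left_cancel_less[of j' m j i] that assms by metis
  then show ?thesis using assms unfolding cyclic_outer_def by blast
qed

lemma cyclic_outer_eq:
  assumes "i < m" "j \<in> cyclic_outer m x i"
  shows "cyclic_outer m x j = cyclic_outer m x i"
proof (cases "j = i")
  case False
  then have "j < m" "(i + j) mod m = x" using assms(2) unfolding cyclic_outer_def by auto
  then show ?thesis
    using cyclic_outer_pair[OF assms(1)] cyclic_outer_pair[of j m i x] assms(1)
    by (simp add: add.commute insert_commute)
qed simp

lemma card_cyclic_outer:
  assumes "i < m"
  shows "card (cyclic_outer m x i) \<in> {1, 2}"
proof (cases "\<exists>j<m. (i + j) mod m = x")
  case True
  then obtain j where "j < m" "(i + j) mod m = x" by blast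
  then show ?thesis using cyclic_outer_pair[OF assms] by (cases "i = j") auto
next
  case False
  then have "cyclic_outer m x i = {i}" using assms unfolding cyclic_outer_def by auto
  then show ?thesis by simp
qed

lemma cyclic_block_inner_iff: "y < k \<Longrightarrow> y \<in> cyclic_block k m x i \<longleftrightarrow> y = x"
  unfolding cyclic_block_def by auto

lemma cyclic_block_outer_iff: "x < k \<Longrightarrow> k + j \<in> cyclic_block k m x i \<longleftrightarrow> j \<in> cyclic_outer m x i"
  unfolding cyclic_block_def by auto

lemma cyclic_block_Int_inner: "x < k \<Longrightarrow> cyclic_block k m x i \<inter> {..<k} = {x}"
  unfolding cyclic_block_def by auto

lemma cyclic_block_Diff_inner: "x < k \<Longrightarrow> cyclic_block k m x i - {..<k} = (+) k ` cyclic_outer m x i"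
  unfolding cyclic_block_def by auto

lemma cyclic_design_cases:
  assumes "C \<in> cyclic_design k m"
  obtains "C = {..<k}" | x i where "C = cyclic_block k m x i" "x < k" "i < m"
  using assms unfolding cyclic_design_def by blast

lemma cyclic_design_block_through:
  assumes "C \<in> cyclic_design k m" "k + b \<in> C" "p \<in> C" "p \<noteq> k + b"
  shows "C = cyclic_block k m (if p < k then p else (b + (p - k)) mod m) b"
proof -
  obtain x i where C: "C = cyclic_block k m x i" "x < k" "i < m"
    using assms(1,2) by (cases rule: cyclic_design_cases) auto
  have "b \<in> cyclic_outer m x i" using assms(2) C cyclic_block_outer_iff by simp
  then have Cb: "C = cyclic_block k m x b"
    using C cyclic_outer_eq unfolding cyclic_block_def by metis
  have "x = (if p < k then p else (b + (p - k)) mod m)"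
  proof (cases "p < k")
    case True
    then show ?thesis using assms(3) C cyclic_block_inner_iff by simp
  next
    case False
    then have "p = k + (p - k)" by simp
    then have "p - k \<in> cyclic_outer m x b" using assms(3) Cb C(2) cyclic_block_outer_iff by metis
    moreover have "p - k \<noteq> b" using assms(4) \<open>p = k + (p - k)\<close> by auto
    ultimately show ?thesis using False unfolding cyclic_outer_def by simp
  qed
  with Cb show ?thesis by simp
qed

lemma cyclic_design_unique_block:
  assumes "C \<in> cyclic_design k m" "C' \<in> cyclic_design k m"
    and "p \<in> C" "q \<in> C" "p \<in> C'" "q \<in> C'" "p \<noteq> q"
  shows "C = C'"
proof -
  have inner: "D = {..<k}" if "D \<in> cyclic_design k m" "p \<in> D" "q \<in> D" "p < k" "q < k" for D
    using that(1) by (cases rule: cyclic_design_cases) (use that assms(7) cyclic_block_inner_iff in auto)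
  consider "p < k" "q < k" | "k \<le> q" | "k \<le> p" by linarith
  then show ?thesis
  proof cases
    case 1
    then show ?thesis using inner assms by metis
  next
    case 2
    then have "k + (q - k) = q" by simp
    then show ?thesis
      using cyclic_design_block_through[of _ k m "q - k" p] assms by metis
  next
    case 3
    then have "k + (p - k) = p" by simp
    then show ?thesis
      using cyclic_design_block_through[of _ k m "p - k" q] assms by metis
  qed
qed

lemma cyclic_design_covers_pair:
  assumes "m \<le> k" "p < k + m" "q < k + m"
  shows "\<exists>C\<in>cyclic_design k m. p \<in> C \<and> q \<in> C"
proof -
  have block: "cyclic_block k m x i \<in> cyclic_design k m" if "x < k" "i < m" for x i
    using that unfolding cyclic_design_def by blast
  have mixed: "\<exists>C\<in>cyclic_design k m. x \<in> C \<and> y \<in> C" if "x < k" "k \<le> y" "y < k + m" for x y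
  proof -
    have "y - k \<in> cyclic_outer m x (y - k)" using that unfolding cyclic_outer_def by simp
    then have "k + (y - k) \<in> cyclic_block k m x (y - k)"
      using cyclic_block_outer_iff[OF that(1)] by blast
    moreover have "x \<in> cyclic_block k m x (y - k)" unfolding cyclic_block_def by simp
    ultimately show ?thesis using block[of x "y - k"] that by auto
  qed
  consider "p < k" "q < k" | "p < k" "k \<le> q" | "k \<le> p" "q < k" | "k \<le> p" "k \<le> q" by linarith
  then show ?thesis
  proof cases
    case 1
    then show ?thesis by (intro bexI[of _ "{..<k}"]) (auto simp: cyclic_design_def)
  next
    case 2
    then show ?thesis using mixed[of p q] assms(3) by blast
  next
    case 3
    then show ?thesis using mixed[of q p] assms(2) by blast
  next
    case 4
    define x where "x = ((p - k) + (q - k)) mod m"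
    have "p - k < m" "q - k < m" using 4 assms by auto
    then have "x < m" unfolding x_def by simp
    then have "x < k" using assms(1) by simp
    have "cyclic_outer m x (p - k) = {p - k, q - k}"
      using \<open>p - k < m\<close> \<open>q - k < m\<close> x_def by (intro cyclic_outer_pair) simp_all
    then have "k + (p - k) \<in> cyclic_block k m x (p - k)" "k + (q - k) \<in> cyclic_block k m x (p - k)"
      using cyclic_block_outer_iff[OF \<open>x < k\<close>] by blast+
    then show ?thesis using 4 block[OF \<open>x < k\<close> \<open>p - k < m\<close>] by auto
  qed
qed

lemma cyclic_design_PBD:
  assumes "m \<le> k"
  shows "PBD {..<k + m} (cyclic_design k m)"
  unfolding PBD_def
proof (intro conjI ballI impI)
  show "B \<subseteq> {..<k + m}" if "B \<in> cyclic_design k m" for B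
    using that
    by (cases rule: cyclic_design_cases) (auto simp: cyclic_block_def cyclic_outer_def)
  show "\<exists>!B. B \<in> cyclic_design k m \<and> p \<in> B \<and> q \<in> B"
    if "p \<in> {..<k + m}" "q \<in> {..<k + m}" "p \<noteq> q" for p q
    using that cyclic_design_covers_pair[OF assms] cyclic_design_unique_block by (metis lessThan_iff)
qed simp

lemma cyclic_design_sum_card:
  assumes "m \<le> k"
  shows "real (\<Sum>C\<in>cyclic_design k m. card C) = real k + 2 * real k * real m - 1 / 2 * (real m * (real m - 1))"
proof -
  have B\<^sub>0: "{..<k} \<in> cyclic_design k m" by (simp add: cyclic_design_def)
  have "real (card (C \<inter> {..<k})) + real (card (C - {..<k}))
      - (2 * real (card (C \<inter> {..<k})) * real (card (C - {..<k}))
         - 1 / 2 * (real (card (C - {..<k})) * (real (card (C - {..<k})) - 1))) = 0"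
    if block: "C \<in> cyclic_design k m - {{..<k}}" for C
  proof -
    have "C \<in> cyclic_design k m" "C \<noteq> {..<k}" using block by auto
    then obtain x i where C: "C = cyclic_block k m x i" "x < k" "i < m"
      by (cases rule: cyclic_design_cases) auto
    have "card (C - {..<k}) = card (cyclic_outer m x i)"
      using C cyclic_block_Diff_inner by (simp add: card_image)
    then have "card (C - {..<k}) \<in> {1, 2}" using card_cyclic_outer[OF C(3)] by simp
    moreover have "card (C \<inter> {..<k}) = 1" using C cyclic_block_Int_inner by simp
    ultimately show ?thesis by auto
  qed
  then show ?thesis
    using PBD_sum_card_eq_excess[OF cyclic_design_PBD[OF assms] B\<^sub>0, of 2 "1 / 2"] by simp
qed

theorem mainTheorem5:
  fixes P :: "'a set" and \<B> :: "'a set set" and n :: nat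
  assumes "PBD P \<B>" and "card P = n" and "n \<ge> 2"
  shows "real (\<Sum>B\<in>\<B>. card B) \<ge> real n * (real n - 1) / (real (Max (card ` \<B>)) - 1)
       \<and> (\<forall>k. (\<exists>B\<in>\<B>. card B = k) \<longrightarrow>
            real (\<Sum>B\<in>\<B>. card B) \<ge> (real n + 1) * real k - (real k)^2 * (real k - 1) / (real n - 1)
          \<and> real (\<Sum>B\<in>\<B>. card B) \<ge> real k - (real n - real k) * (real n - 5 * real k - 1) / 2)
       \<and> (\<forall>k::nat. real n / 2 \<le> real k \<and> k \<le> n \<longrightarrow>
            (\<exists>(Q :: nat set) \<C>. PBD Q \<C> \<and> card Q = n \<and> (\<exists>C\<in>\<C>. card C = k) \<and>
               real (\<Sum>C\<in>\<C>. card C) = real k - (real n - real k) * (real n - 5 * real k - 1) / 2))"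
proof (intro conjI allI impI)
  show "real n * (real n - 1) / (real (Max (card ` \<B>)) - 1) \<le> real (\<Sum>B\<in>\<B>. card B)"
    using PBD_sum_card_ge_Max[OF assms(1)] assms(2,3) by simp
next
  fix k assume "\<exists>B\<in>\<B>. card B = k"
  then obtain B\<^sub>0 where "B\<^sub>0 \<in> \<B>" "card B\<^sub>0 = k" by blast
  then show "(real n + 1) * real k - (real k)^2 * (real k - 1) / (real n - 1) \<le> real (\<Sum>B\<in>\<B>. card B)"
    and "real k - (real n - real k) * (real n - 5 * real k - 1) / 2 \<le> real (\<Sum>B\<in>\<B>. card B)"
    using PBD_sum_card_ge_cubic[OF assms(1)] PBD_sum_card_ge_quadratic[OF assms(1)] assms(2,3) by auto
next
  fix k :: nat assume k: "real n / 2 \<le> real k \<and> k \<le> n"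
  define m where "m = n - k"
  have "m \<le> k" "n = k + m" using k unfolding m_def by linarith+
  moreover have "real k + 2 * real k * real m - 1 / 2 * (real m * (real m - 1))
      = real k - (real n - real k) * (real n - 5 * real k - 1) / 2"
    using \<open>n = k + m\<close> by (simp add: field_simps)
  ultimately show "\<exists>(Q :: nat set) \<C>. PBD Q \<C> \<and> card Q = n \<and> (\<exists>C\<in>\<C>. card C = k) \<and>
      real (\<Sum>C\<in>\<C>. card C) = real k - (real n - real k) * (real n - 5 * real k - 1) / 2"
    using cyclic_design_PBD cyclic_design_sum_card
    by (intro exI[of _ "{..<k + m}"] exI[of _ "cyclic_design k m"]) (auto simp: cyclic_design_def)
qed

end
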